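(* Consider an execution of algorithm $\mathcal{A}_2$ (described in the context) in a synchronous message-passing system of $n$ processes with authentication in which up to $t<n$ processes are Byzantine. If a correct process $p_i$ decides a value $v \neq \bot$, then no correct process decides $\bot$.
   Context: Model: synchronous rounds, reliable channels between all pairs, unforgeable signatures, up to $t$ Byzantine processes; the others are correct. Terminating Reliable Broadcast (TRB) with sender $p$: $p$ broadcasts a value $m$ and every process delivers either a value or a special value $SF$, satisfying: (Termination) every correct process delivers some value; (Validity) if the sender is correct and broadcasts $m$, every correct process delivers $m$; (Integrity) a process delivers at most once, and if it delivers $m\ne SF$ then $m$ was broadcast by the sender; (Agreement) if a correct process delivers $m$, all correct processes deliver $m$. TRB is implemented in this model in $t+1$ rounds by the classical authenticated signature-chain algorithm. Algorithm $\mathcal{A}_2$, code of $p_i$ with input $v_i$: Phase 1: $n$ instances of TRB are run, instance $q$ having $p_q$ as sender; $p_i$ broadcasts $v_i$ in its own instance and sets $L_i[p_i] := v_i$; for each process $q$, $p_i$ sets $L_i[q]$ to the value (possibly $SF$) delivered in the instance with sender $q$. Phase 2: if at least $n-t$ entries of $L_i$ equal $v_i$, decide $v_i$; else, if some value $v$ appears at least $n-t$ times in $L_i$, decide such a $v$; else decide $\bot$. *)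

theory Defs
  imports Main
begin

datatype 'v trb_val = Val 'v | SF

datatype 'v decision = Dec 'v | Bot

text \<open>Specification of one TRB instance with sender s, set C of correct processes,
  set B of values broadcast by the sender, and deliveries d (d p is the unique value
  delivered by p; totality of d on C expresses Termination and "at most once").\<close>
definition trb_spec :: "'p set \<Rightarrow> 'p \<Rightarrow> 'v set \<Rightarrow> ('p \<Rightarrow> 'v trb_val) \<Rightarrow> bool" where
  "trb_spec C s B d \<longleftrightarrow>
     \<comment> \<open>Validity\<close>
     (s \<in> C \<longrightarrow> (\<forall>m. B = {m} \<longrightarrow> (\<forall>p\<in>C. d p = Val m))) \<and>
     \<comment> \<open>Integrity\<close>
     (\<forall>p\<in>C. \<forall>m. d p = Val m \<longrightarrow> m \<in> B) \<and>
     \<comment> \<open>Agreement\<close>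
     (\<forall>p\<in>C. \<forall>p'\<in>C. \<forall>x. d p = x \<longrightarrow> d p' = x)"

text \<open>Phase 1: vector L_i of process i. D q p is the value delivered by p in the
  instance with sender q; the own entry is overwritten by the own input.\<close>
definition a2_vector :: "('p \<Rightarrow> 'p \<Rightarrow> 'v trb_val) \<Rightarrow> ('p \<Rightarrow> 'v) \<Rightarrow> 'p \<Rightarrow> 'p \<Rightarrow> 'v trb_val" where
  "a2_vector D v i q = (if q = i then Val (v i) else D q i)"

definition occ :: "('p \<Rightarrow> 'v trb_val) \<Rightarrow> 'v \<Rightarrow> nat" where
  "occ L w = card {q. L q = Val w}"

text \<open>Phase 2 (nondeterministic choice of "such a v"): d is a possible decision of a
  process with input vi and vector L.\<close>
definition a2_decides :: "nat \<Rightarrow> nat \<Rightarrow> 'v \<Rightarrow> ('p \<Rightarrow> 'v trb_val) \<Rightarrow> 'v decision \<Rightarrow> bool" where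
  "a2_decides n t vi L d \<longleftrightarrow>
     (occ L vi \<ge> n - t \<and> d = Dec vi) \<or>
     (occ L vi < n - t \<and> (\<exists>w. occ L w \<ge> n - t \<and> d = Dec w)) \<or>
     (occ L vi < n - t \<and> \<not> (\<exists>w. occ L w \<ge> n - t) \<and> d = Bot)"

end

theory Submission
  imports Defs
begin

text \<open>By Validity and Agreement of the TRB instances, all correct processes end Phase 1
  with the same vector: the own entry a correct process writes equals what every other
  correct process delivered for it. A decision \<open>v\<close> certifies \<open>n - t\<close> occurrences of
  \<open>v\<close> in that vector, whereas \<open>\<bottom>\<close> is decided only when no value occurs that often.\<close>

lemma trb_spec_correct_sender:
  assumes "trb_spec C s {m} d" and "s \<in> C" and "p \<in> C"
  shows "d p = Val m"
  using assms unfolding trb_spec_def by blast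

lemma trb_spec_agreement:
  assumes "trb_spec C s B d" and "p \<in> C" and "p' \<in> C"
  shows "d p = d p'"
  using assms unfolding trb_spec_def by blast

lemma a2_vector_correct_eq:
  assumes correct_bcast: "\<And>q. q \<in> C \<Longrightarrow> B q = {v q}"
    and trb: "\<And>q. trb_spec C q (B q) (D q)"
    and "i \<in> C" and "j \<in> C"
  shows "a2_vector D v i = a2_vector D v j"
proof
  fix q
  have own: "D p p' = Val (v p)" if "p \<in> C" "p' \<in> C" for p p'
    using trb_spec_correct_sender[OF trb[of p, unfolded correct_bcast[OF that(1)]]] that
    by blast
  show "a2_vector D v i q = a2_vector D v j q"
    using own[OF \<open>i \<in> C\<close> \<open>j \<in> C\<close>] own[OF \<open>j \<in> C\<close> \<open>i \<in> C\<close>]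
      trb_spec_agreement[OF trb \<open>i \<in> C\<close> \<open>j \<in> C\<close>, of q]
    unfolding a2_vector_def by auto
qed

lemma a2_decides_Dec_occ:
  assumes "a2_decides n t vi L (Dec w)"
  shows "n - t \<le> occ L w"
  using assms unfolding a2_decides_def by auto

lemma a2_decides_Bot_occ:
  assumes "a2_decides n t vi L Bot"
  shows "occ L w < n - t"
  using assms unfolding a2_decides_def by (auto simp: not_le)

theorem lemma7:
  fixes C :: "'p::finite set"
    and t :: nat
    and v :: "'p \<Rightarrow> 'v"
    and B :: "'p \<Rightarrow> 'v set"
    and D :: "'p \<Rightarrow> 'p \<Rightarrow> 'v trb_val"
    and dec :: "'p \<Rightarrow> 'v decision"
  assumes "t < card (UNIV :: 'p set)"
    and "card (UNIV - C) \<le> t"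
    and "\<And>q. q \<in> C \<Longrightarrow> B q = {v q}"
    and "\<And>q. trb_spec C q (B q) (D q)"
    and "\<And>i. i \<in> C \<Longrightarrow> a2_decides (card (UNIV :: 'p set)) t (v i) (a2_vector D v i) (dec i)"
    and "i \<in> C" and "dec i = Dec w"
    and "j \<in> C"
  shows "dec j \<noteq> Bot"
proof
  assume "dec j = Bot"
  have same_vector: "a2_vector D v i = a2_vector D v j"
    using a2_vector_correct_eq[OF assms(3,4,6,8)] .
  have "card (UNIV :: 'p set) - t \<le> occ (a2_vector D v j) w"
    using a2_decides_Dec_occ[of _ _ _ _ w] assms(5)[OF assms(6)] assms(7) same_vector
    by metis
  moreover have "occ (a2_vector D v j) w < card (UNIV :: 'p set) - t"
    using a2_decides_Bot_occ assms(5)[OF assms(8)] \<open>dec j = Bot\<close> by metis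
  ultimately show False
    by simp
qed

end
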